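(* Let $p$ be an odd prime, $r,m$ positive integers and $s\in\{1,2,\dots,mp^{r-1}\}$. Then $$\binom{mp^{r-1}}{s}\binom{2sp}{sp}\binom{2(mp^{r-1}-s)p}{(mp^{r-1}-s)p}\equiv\begin{cases}\binom{m}{s}\binom{2s}{s}\binom{2(m-s)}{m-s}(1+9m)\pmod{p^{r+2}} & \text{if } r=1 \text{ and } p=3,\\ \binom{mp^{r-1}}{s}\binom{2s}{s}\binom{2(mp^{r-1}-s)}{mp^{r-1}-s}\pmod{p^{r+2}} & \text{if } r>1 \text{ or } p>3.\end{cases}$$ *)

theory Defs
  imports "HOL-Number_Theory.Number_Theory"
begin

end

theory Submission
  imports Defs
begin

text \<open>
Let Q(a) be the product of the integers in [1, ap] prime to p, and F(a) the product of those in
(ap, 2ap]. Removing the multiples of p from (2ap)! and (ap)! gives C(2ap, ap) Q(a) = C(2a, a) F(a),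
so everything reduces to comparing F(a) with Q(a). Pairing j with ap - j gives
Q(a)^2 = prod j(ap - j) and F(a)^2 = prod (j(ap - j) + 2a^2p^2); expanding to first order in
2a^2p^2 and evaluating the linear term with Fermat's little theorem gives
  F(a)^2 == Q(a)^2 (1 - 2a^3p^2 S)  (mod 2a^2p^3),   S = sum_{0<i<p} i^(p-3).
For p >= 5, S vanishes mod p, so F(a) == Q(a) (mod p^(e+3)) whenever p^e | a; for p = 3 this still
holds when e > 0, and in general S = 2 gives F(a) == Q(a)(1 + 9a) (mod 27). The powers of p still
missing come from C(N, s), which is divisible by p^(n-j) when p^n | N and p^j is the p-part of s.
\<close>

definition nonmultiples :: "nat \<Rightarrow> nat \<Rightarrow> nat set" where
  "nonmultiples p a = {j \<in> {1..a * p}. \<not> p dvd j}"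

definition nonmult_prod :: "nat \<Rightarrow> nat \<Rightarrow> int" where
  "nonmult_prod p a = (\<Prod>j\<in>nonmultiples p a. int j)"

definition nonmult_prod_upper :: "nat \<Rightarrow> nat \<Rightarrow> int" where
  "nonmult_prod_upper p a = (\<Prod>j\<in>nonmultiples p a. int (a * p + j))"

lemma finite_nonmultiples [simp]: "finite (nonmultiples p a)"
  by (simp add: nonmultiples_def)

lemma nonmultiples_0 [simp]: "nonmultiples p 0 = {}"
  by (simp add: nonmultiples_def)

lemma nonmultiples_1: "nonmultiples p 1 = {1..<p}"
  by (auto simp: nonmultiples_def le_less dest: dvd_imp_le)

lemma nonmultiples_add:
  "nonmultiples p (a + b) = nonmultiples p a \<union> (\<lambda>j. a * p + j) ` nonmultiples p b"
proof (intro equalityI subsetI)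
  fix j assume j: "j \<in> nonmultiples p (a + b)"
  show "j \<in> nonmultiples p a \<union> (\<lambda>j. a * p + j) ` nonmultiples p b"
  proof (cases "j \<le> a * p")
    case False
    then have "j - a * p \<in> nonmultiples p b"
      using j by (auto simp: nonmultiples_def algebra_simps dest: dvd_diffD)
    then show ?thesis
      using False by (intro UnI2 image_eqI[of _ _ "j - a * p"]) auto
  qed (use j in \<open>auto simp: nonmultiples_def\<close>)
qed (auto simp: nonmultiples_def algebra_simps dvd_add_right_iff)

lemma nonmultiples_add_disjoint:
  "nonmultiples p a \<inter> (\<lambda>j. a * p + j) ` nonmultiples p b = {}"
  by (auto simp: nonmultiples_def)

lemma card_nonmultiples: "card (nonmultiples p a) = a * (p - 1)"
proof (induction a)
  case (Suc a)
  have "card (nonmultiples p (a + 1)) = card (nonmultiples p a) + card (nonmultiples p 1)"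
    unfolding nonmultiples_add
    by (subst card_Un_disjoint) (auto simp: nonmultiples_add_disjoint card_image)
  then show ?case
    using Suc.IH by (simp only: nonmultiples_1 card_atLeastLessThan) simp
qed simp

lemma nonmultiples_reflect:
  "bij_betw (\<lambda>j. a * p - j) (nonmultiples p a) (nonmultiples p a)"
proof -
  have "a * p - j \<in> nonmultiples p a" if j: "j \<in> nonmultiples p a" for j
  proof -
    have "j < a * p"
      using j by (auto simp: nonmultiples_def le_less)
    moreover have "\<not> p dvd a * p - j"
      using j \<open>j < a * p\<close> by (auto simp: nonmultiples_def dest: dvd_diffD1)
    ultimately show ?thesis
      by (simp add: nonmultiples_def)
  qed
  then show ?thesis
    by (intro bij_betw_byWitness[where f' = "\<lambda>j. a * p - j"]) (auto simp: nonmultiples_def)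
qed

lemma nonmult_prod_pos: "nonmult_prod p a > 0"
  unfolding nonmult_prod_def by (rule prod_pos) (auto simp: nonmultiples_def)

lemma multiples_upto:
  fixes p a :: nat
  assumes "p > 0"
  shows "{j \<in> {1..a * p}. p dvd j} = (\<lambda>k. p * k) ` {1..a}"
proof (intro equalityI subsetI)
  fix j assume j: "j \<in> {j \<in> {1..a * p}. p dvd j}"
  then obtain k where k: "j = p * k"
    by blast
  with j assms have "k \<in> {1..a}"
    by (auto simp: mult.commute[of a])
  with k show "j \<in> (\<lambda>k. p * k) ` {1..a}"
    by blast
qed (use assms in \<open>auto simp: mult.commute\<close>)

lemma fact_mult_eq:
  assumes "p > 0"
  shows "(fact (a * p) :: int) = int p ^ a * fact a * nonmult_prod p a"
proof -
  have split: "{1..a * p} = nonmultiples p a \<union> {j \<in> {1..a * p}. p dvd j}"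
    by (auto simp: nonmultiples_def)
  have "(fact (a * p) :: int) = (\<Prod>j\<in>{1..a * p}. int j)"
    by (simp only: fact_prod of_nat_prod)
  also have "\<dots> = nonmult_prod p a * (\<Prod>j\<in>{j \<in> {1..a * p}. p dvd j}. int j)"
    unfolding nonmult_prod_def by (subst split, rule prod.union_disjoint) (auto simp: nonmultiples_def)
  also have "(\<Prod>j\<in>{j \<in> {1..a * p}. p dvd j}. int j) = (\<Prod>k\<in>{1..a}. int p * int k)"
    unfolding multiples_upto[OF assms] using assms by (subst prod.reindex) (auto simp: inj_on_def)
  also have "\<dots> = int p ^ a * fact a"
    by (simp only: prod.distrib prod_constant card_atLeastAtMost diff_Suc_1 fact_prod of_nat_prod)
  finally show ?thesis
    by simp
qed

lemma fact_double_eq: "(fact (2 * n) :: int) = fact n * fact n * int ((2 * n) choose n)"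
proof -
  have "fact n * fact n * ((2 * n) choose n) = (fact (2 * n) :: nat)"
    using binomial_fact_lemma[of n "2 * n"] by simp
  then show ?thesis
    by (metis of_nat_fact of_nat_mult)
qed

lemma nonmult_prod_double:
  "nonmult_prod p (2 * a) = nonmult_prod p a * nonmult_prod_upper p a"
proof -
  have "nonmult_prod p (a + a)
          = nonmult_prod p a * (\<Prod>j\<in>(\<lambda>j. a * p + j) ` nonmultiples p a. int j)"
    unfolding nonmult_prod_def nonmultiples_add
    by (rule prod.union_disjoint) (auto simp: nonmultiples_add_disjoint)
  also have "(\<Prod>j\<in>(\<lambda>j. a * p + j) ` nonmultiples p a. int j) = nonmult_prod_upper p a"
    unfolding nonmult_prod_upper_def by (subst prod.reindex) (auto simp: inj_on_def)
  finally show ?thesis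
    by (simp only: mult_2)
qed

lemma central_binomial_nonmult:
  assumes "p > 0"
  shows "int ((2 * a * p) choose (a * p)) * nonmult_prod p a
           = int ((2 * a) choose a) * nonmult_prod_upper p a"
proof -
  define L where "L = int p ^ a * fact a"
  define Q where "Q = nonmult_prod p a"
  have L: "L \<noteq> 0" "fact (a * p) = L * Q"
    using assms fact_mult_eq[OF assms] by (auto simp: L_def Q_def)
  have "(L * Q) * (L * (int ((2 * a * p) choose (a * p)) * Q)) = fact (2 * (a * p))"
    unfolding fact_double_eq L(2) by (simp only: ac_simps)
  also have "\<dots> = int p ^ (a + a) * fact (2 * a) * nonmult_prod p (2 * a)"
    using fact_mult_eq[OF assms, of "2 * a"] by (simp only: mult.assoc mult_2 add_mult_distrib)
  also have "\<dots> = (L * Q) * (L * (int ((2 * a) choose a) * nonmult_prod_upper p a))"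
    unfolding fact_double_eq nonmult_prod_double power_add L_def Q_def by (simp only: ac_simps)
  finally show ?thesis
    using L(1) nonmult_prod_pos[of p a] by (simp add: Q_def)
qed

lemma prod_nonmultiples_reflect:
  "(\<Prod>j\<in>nonmultiples p a. f (a * p - j)) = (\<Prod>j\<in>nonmultiples p a. f j)"
  by (rule prod.reindex_bij_betw[OF nonmultiples_reflect])

lemma nonmult_prod_sq:
  "nonmult_prod p a ^ 2 = (\<Prod>j\<in>nonmultiples p a. int j * (int (a * p) - int j))"
proof -
  have "nonmult_prod p a = (\<Prod>j\<in>nonmultiples p a. int (a * p) - int j)"
    unfolding nonmult_prod_def prod_nonmultiples_reflect[where f = int, symmetric]
    by (rule prod.cong) (auto simp: nonmultiples_def of_nat_diff)
  then have "nonmult_prod p a ^ 2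
      = (\<Prod>j\<in>nonmultiples p a. int j) * (\<Prod>j\<in>nonmultiples p a. int (a * p) - int j)"
    by (simp add: power2_eq_square nonmult_prod_def)
  then show ?thesis
    by (simp add: prod.distrib)
qed

lemma nonmult_prod_upper_sq:
  "nonmult_prod_upper p a ^ 2
     = (\<Prod>j\<in>nonmultiples p a. int j * (int (a * p) - int j) + 2 * int a ^ 2 * int p ^ 2)"
proof -
  have "nonmult_prod_upper p a = (\<Prod>j\<in>nonmultiples p a. 2 * int (a * p) - int j)"
    unfolding nonmult_prod_upper_def prod_nonmultiples_reflect[where f = "\<lambda>j. int (a * p + j)", symmetric]
    by (rule prod.cong) (auto simp: nonmultiples_def of_nat_diff)
  then have "nonmult_prod_upper p a ^ 2
      = (\<Prod>j\<in>nonmultiples p a. 2 * int (a * p) - int j) * (\<Prod>j\<in>nonmultiples p a. int (a * p + j))"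
    by (simp add: power2_eq_square nonmult_prod_upper_def)
  also have "\<dots> = (\<Prod>j\<in>nonmultiples p a. (2 * int (a * p) - int j) * int (a * p + j))"
    by (simp add: prod.distrib)
  also have "\<dots> = (\<Prod>j\<in>nonmultiples p a. int j * (int (a * p) - int j) + 2 * int a ^ 2 * int p ^ 2)"
    by (rule prod.cong) (auto simp: algebra_simps power2_eq_square)
  finally show ?thesis .
qed

lemma nonmult_prod_upper_cong_mod_p: "[nonmult_prod_upper p a = nonmult_prod p a] (mod int p)"
  unfolding nonmult_prod_upper_def nonmult_prod_def
  by (rule cong_prod) (simp add: cong_iff_dvd_diff)

lemma prime_not_dvd_nonmult_prod:
  assumes "prime p"
  shows "\<not> int p dvd nonmult_prod p a"
proof
  assume "int p dvd nonmult_prod p a"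
  then obtain j where "j \<in> nonmultiples p a" "int p dvd int j"
    using assms prime_dvd_prod_iff[of "nonmultiples p a" "int p"]
    by (auto simp: nonmult_prod_def)
  then show False
    by (simp add: nonmultiples_def)
qed

lemma prod_add_const_expand:
  fixes w :: "'a \<Rightarrow> 'b::comm_ring_1"
  assumes "finite A"
  shows "c ^ 2 dvd (\<Prod>j\<in>A. w j + c) - ((\<Prod>j\<in>A. w j) + c * (\<Sum>j\<in>A. \<Prod>i\<in>A - {j}. w i))"
  using assms
proof (induction A rule: finite_induct)
  case (insert x A)
  define E where "E = (\<Sum>j\<in>A. \<Prod>i\<in>A - {j}. w i)"
  obtain R where R: "(\<Prod>j\<in>A. w j + c) = (\<Prod>j\<in>A. w j) + c * E + c ^ 2 * R"
    using insert.IH by (auto simp: E_def algebra_simps elim!: dvdE)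
  have "(\<Sum>j\<in>A. \<Prod>i\<in>insert x A - {j}. w i) = (\<Sum>j\<in>A. w x * (\<Prod>i\<in>A - {j}. w i))"
    using insert.hyps by (intro sum.cong refl) (auto simp: insert_Diff_if)
  then have "(\<Sum>j\<in>insert x A. \<Prod>i\<in>insert x A - {j}. w i) = (\<Prod>j\<in>A. w j) + w x * E"
    using insert.hyps by (simp add: E_def sum_distrib_left)
  then have "(\<Prod>j\<in>insert x A. w j + c)
      - ((\<Prod>j\<in>insert x A. w j) + c * (\<Sum>j\<in>insert x A. \<Prod>i\<in>insert x A - {j}. w i))
      = c ^ 2 * (E + (w x + c) * R)"
    using insert.hyps R by (simp add: algebra_simps power2_eq_square)
  then show ?case
    by simp
qed simp

lemma sum_powers_nonmultiples_cong:
  "[(\<Sum>j\<in>nonmultiples p a. int j ^ k) = int a * (\<Sum>i\<in>{1..<p}. int i ^ k)] (mod int p)"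
proof (induction a)
  case (Suc a)
  have "(\<Sum>j\<in>nonmultiples p (a + 1). int j ^ k)
      = (\<Sum>j\<in>nonmultiples p a. int j ^ k) + (\<Sum>j\<in>(\<lambda>j. a * p + j) ` nonmultiples p 1. int j ^ k)"
    unfolding nonmultiples_add by (rule sum.union_disjoint) (auto simp: nonmultiples_add_disjoint)
  also have "(\<Sum>j\<in>(\<lambda>j. a * p + j) ` nonmultiples p 1. int j ^ k) = (\<Sum>i\<in>{1..<p}. int (a * p + i) ^ k)"
    unfolding nonmultiples_1 by (subst sum.reindex) (auto simp: inj_on_def)
  finally have "(\<Sum>j\<in>nonmultiples p (a + 1). int j ^ k)
      = (\<Sum>j\<in>nonmultiples p a. int j ^ k) + (\<Sum>i\<in>{1..<p}. int (a * p + i) ^ k)" .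
  also have "[\<dots> = int a * (\<Sum>i\<in>{1..<p}. int i ^ k) + (\<Sum>i\<in>{1..<p}. int i ^ k)] (mod int p)"
    by (intro cong_add Suc.IH cong_sum cong_pow) (simp add: cong_iff_dvd_diff)
  finally show ?case
    by (simp add: algebra_simps)
qed simp

lemma even_card_nonmultiples: "odd p \<Longrightarrow> even (card (nonmultiples p a))"
  by (simp add: card_nonmultiples)

lemma nonmult_cross_term_cong:
  assumes "prime p" "odd p" "j \<in> nonmultiples p a"
  shows "[(\<Prod>i\<in>nonmultiples p a - {j}. int i * (int (a * p) - int i))
          = - (nonmult_prod p a ^ 2 * int j ^ (p - 3))] (mod int p)"
proof -
  define P where "P = (\<Prod>i\<in>nonmultiples p a - {j}. int i ^ 2)"
  have "p \<ge> 3"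
    using assms(1,2) prime_ge_2_nat[of p] by (cases "p = 2") auto
  have "odd (card (nonmultiples p a - {j}))"
    using assms even_card_nonmultiples[of p a] by (auto simp: card_gt_0_iff)
  have "[(\<Prod>i\<in>nonmultiples p a - {j}. int i * (int (a * p) - int i))
          = (\<Prod>i\<in>nonmultiples p a - {j}. - (int i ^ 2))] (mod int p)"
    by (rule cong_prod) (simp add: cong_iff_dvd_diff algebra_simps power2_eq_square)
  also have "(\<Prod>i\<in>nonmultiples p a - {j}. - (int i ^ 2)) = - P"
    using \<open>odd (card _)\<close> by (simp add: prod_uminus P_def)
  also have "[- P = - (int j ^ (p - 1) * P)] (mod int p)"
  proof -
    have "[j ^ (p - 1) = 1] (mod p)"
      using assms by (intro fermat_theorem) (auto simp: nonmultiples_def)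
    then have "[int j ^ (p - 1) * P = 1 * P] (mod int p)"
      by (intro cong_mult cong_refl) (metis cong_int_iff of_nat_1 of_nat_power)
    then show ?thesis
      by (simp add: cong_sym cong_minus_minus_iff)
  qed
  also have "int j ^ (p - 1) * P = nonmult_prod p a ^ 2 * int j ^ (p - 3)"
  proof -
    have "p - 1 = (p - 3) + 2"
      using \<open>p \<ge> 3\<close> by simp
    then have "int j ^ (p - 1) = int j ^ (p - 3) * int j ^ 2"
      by (metis power_add)
    moreover have "int j ^ 2 * P = nonmult_prod p a ^ 2"
      using assms(3) by (simp add: P_def nonmult_prod_def prod.remove power_mult_distrib prod_power_distrib)
    ultimately show ?thesis
      by (simp add: ac_simps)
  qed
  finally show ?thesis .
qed

lemma nonmult_cross_sum_cong:
  assumes "prime p" "odd p"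
  shows "[(\<Sum>j\<in>nonmultiples p a. \<Prod>i\<in>nonmultiples p a - {j}. int i * (int (a * p) - int i))
          = - (int a * nonmult_prod p a ^ 2 * (\<Sum>i\<in>{1..<p}. int i ^ (p - 3)))] (mod int p)"
proof -
  have "[(\<Sum>j\<in>nonmultiples p a. \<Prod>i\<in>nonmultiples p a - {j}. int i * (int (a * p) - int i))
          = (\<Sum>j\<in>nonmultiples p a. - (nonmult_prod p a ^ 2 * int j ^ (p - 3)))] (mod int p)"
    using assms by (intro cong_sum nonmult_cross_term_cong)
  also have "(\<Sum>j\<in>nonmultiples p a. - (nonmult_prod p a ^ 2 * int j ^ (p - 3)))
      = - (nonmult_prod p a ^ 2 * (\<Sum>j\<in>nonmultiples p a. int j ^ (p - 3)))"
    by (simp add: sum_negf sum_distrib_left)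
  also have "[\<dots> = - (nonmult_prod p a ^ 2 * (int a * (\<Sum>i\<in>{1..<p}. int i ^ (p - 3))))] (mod int p)"
    by (intro cong_uminus cong_mult cong_refl sum_powers_nonmultiples_cong)
  finally show ?thesis
    by (simp add: ac_simps)
qed

lemma nonmult_prod_upper_sq_cong:
  assumes "prime p" "odd p"
  shows "[nonmult_prod_upper p a ^ 2 = nonmult_prod p a ^ 2
            * (1 - 2 * int a ^ 3 * int p ^ 2 * (\<Sum>i\<in>{1..<p}. int i ^ (p - 3)))]
           (mod 2 * int a ^ 2 * int p ^ 3)"
proof -
  define c where "c = 2 * int a ^ 2 * int p ^ 2"
  define E where "E = (\<Sum>j\<in>nonmultiples p a. \<Prod>i\<in>nonmultiples p a - {j}. int i * (int (a * p) - int i))"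
  define S where "S = (\<Sum>i\<in>{1..<p}. int i ^ (p - 3))"
  have cross: "[c * E = c * - (int a * nonmult_prod p a ^ 2 * S)] (mod c * int p)"
    using nonmult_cross_sum_cong[OF assms, of a]
    unfolding cong_iff_dvd_diff E_def S_def right_diff_distrib[symmetric]
    by (rule mult_dvd_mono[OF dvd_refl])
  have "c ^ 2 dvd nonmult_prod_upper p a ^ 2 - (nonmult_prod p a ^ 2 + c * E)"
    unfolding nonmult_prod_upper_sq nonmult_prod_sq c_def E_def by (rule prod_add_const_expand) simp
  moreover have "c * int p dvd c ^ 2"
    by (simp add: c_def power2_eq_square)
  ultimately have "[nonmult_prod_upper p a ^ 2 = nonmult_prod p a ^ 2 + c * E] (mod c * int p)"
    unfolding cong_iff_dvd_diff by (rule dvd_trans[rotated])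
  also have "[nonmult_prod p a ^ 2 + c * E
      = nonmult_prod p a ^ 2 + c * - (int a * nonmult_prod p a ^ 2 * S)] (mod c * int p)"
    using cross by (rule cong_add[OF cong_refl])
  finally show ?thesis
    by (simp add: c_def S_def algebra_simps power_numeral_reduce)
qed

lemma sum_powers_p_minus_3_cong_sum_squares:
  fixes p :: nat
  assumes "prime p" "p \<ge> 3"
  shows "[(\<Sum>i\<in>{1..<p}. i ^ (p - 3)) = (\<Sum>i\<in>{1..<p}. i ^ 2)] (mod p)"
proof -
  \<comment> \<open>inversion modulo p; it permutes the units and i^(p-3) == recip(i)^2\<close>
  define recip where "recip i = i ^ (p - 2) mod p" for i
  have fermat: "[i ^ (p - 1) = 1] (mod p)" if "i \<in> {1..<p}" for i
    using assms(1) that by (intro fermat_theorem) (auto dest: dvd_imp_le)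
  have recip_range: "recip i \<in> {1..<p}" if i: "i \<in> {1..<p}" for i
  proof -
    have "\<not> p dvd i"
      using i by (auto dest: dvd_imp_le)
    then have "\<not> p dvd i ^ (p - 2)"
      using assms(1) prime_dvd_power by blast
    then have "recip i \<noteq> 0"
      unfolding recip_def using mod_0_imp_dvd by blast
    moreover have "recip i < p"
      using assms by (simp add: recip_def)
    ultimately show ?thesis
      by simp
  qed
  have recip_sq: "[recip i ^ 2 = i ^ (p - 3)] (mod p)" if i: "i \<in> {1..<p}" for i
  proof -
    have "(p - 2) * 2 = (p - 1) + (p - 3)"
      using assms(2) by simp
    then have "(i ^ (p - 2)) ^ 2 = i ^ (p - 1) * i ^ (p - 3)"
      by (metis power_mult power_add)
    moreover have "[recip i ^ 2 = (i ^ (p - 2)) ^ 2] (mod p)"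
      by (simp add: recip_def cong_def power_mod)
    moreover have "[i ^ (p - 1) * i ^ (p - 3) = 1 * i ^ (p - 3)] (mod p)"
      by (intro cong_mult cong_refl fermat[OF i])
    ultimately show ?thesis
      by (metis cong_trans mult_1)
  qed
  have recip_recip: "recip (recip i) = i" if i: "i \<in> {1..<p}" for i
  proof -
    obtain q where "p = q + 3"
      using assms(2) by (metis add.commute le_Suc_ex)
    then have "(p - 2) * (p - 2) = (p - 1) * (p - 3) + 1"
      by (simp add: algebra_simps)
    then have "(i ^ (p - 2)) ^ (p - 2) = (i ^ (p - 1)) ^ (p - 3) * i"
      by (metis power_mult power_add power_one_right)
    moreover have "[(i ^ (p - 1)) ^ (p - 3) * i = 1 ^ (p - 3) * i] (mod p)"
      by (intro cong_mult cong_pow cong_refl fermat[OF i])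
    ultimately have "[(i ^ (p - 2)) ^ (p - 2) = i] (mod p)"
      by simp
    then show ?thesis
      using i by (simp add: recip_def cong_def power_mod)
  qed
  have "bij_betw recip {1..<p} {1..<p}"
    by (rule bij_betw_byWitness[where f' = recip]) (use recip_recip recip_range in auto)
  then have "(\<Sum>i\<in>{1..<p}. recip i ^ 2) = (\<Sum>i\<in>{1..<p}. i ^ 2)"
    by (rule sum.reindex_bij_betw)
  moreover have "[(\<Sum>i\<in>{1..<p}. recip i ^ 2) = (\<Sum>i\<in>{1..<p}. i ^ (p - 3))] (mod p)"
    by (intro cong_sum recip_sq)
  ultimately show ?thesis
    by (simp add: cong_sym)
qed

lemma prime_dvd_sum_squares:
  fixes p :: nat
  assumes "prime p" "p \<ge> 5"
  shows "p dvd (\<Sum>i\<in>{1..<p}. i ^ 2)"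
proof -
  have "{1..<p} = {1..p - 1}"
    using assms(2) atLeastLessThanSuc_atLeastAtMost[of 1 "p - 1"] by simp
  moreover have "6 * (\<Sum>i\<in>{1..n}. i ^ 2) = n * (n + 1) * (2 * n + 1)" for n :: nat
    by (induction n) (auto simp: power2_eq_square algebra_simps)
  ultimately have "6 * (\<Sum>i\<in>{1..<p}. i ^ 2) = (p - 1) * (p - 1 + 1) * (2 * (p - 1) + 1)"
    by (simp only:)
  moreover have "p - 1 + 1 = p"
    using assms(2) by simp
  ultimately have "p dvd 6 * (\<Sum>i\<in>{1..<p}. i ^ 2)"
    by simp
  moreover have "\<not> p dvd 6"
  proof
    assume "p dvd 6"
    then have "p dvd 2 \<or> p dvd 3"
      using assms(1) prime_dvd_mult_iff[of p 2 3] by simp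
    then show False
      using assms(2) by (auto dest: dvd_imp_le)
  qed
  ultimately show ?thesis
    using assms(1) prime_dvd_mult_iff by blast
qed

lemma prime_dvd_sum_powers_p_minus_3:
  assumes "prime p" "p \<ge> 5"
  shows "int p dvd (\<Sum>i\<in>{1..<p}. int i ^ (p - 3))"
proof -
  have "p dvd (\<Sum>i\<in>{1..<p}. i ^ (p - 3))"
    using assms sum_powers_p_minus_3_cong_sum_squares[OF assms(1)] prime_dvd_sum_squares
    by (simp add: cong_dvd_iff)
  then have "int p dvd int (\<Sum>i\<in>{1..<p}. i ^ (p - 3))"
    by (simp only: int_dvd_int_iff)
  then show ?thesis
    by simp
qed

lemma cong_of_square_cong:
  fixes x y :: int
  assumes "prime p" "odd p" "[x = y] (mod int p)" "\<not> int p dvd y" "[x ^ 2 = y ^ 2] (mod int p ^ k)"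
  shows "[x = y] (mod int p ^ k)"
proof -
  have "\<not> int p dvd x + y"
  proof
    assume "int p dvd x + y"
    moreover have "int p dvd x - y"
      using assms(3) by (simp add: cong_iff_dvd_diff)
    ultimately have "int p dvd (x + y) - (x - y)"
      by (rule dvd_diff)
    then have "int p dvd 2 * y"
      by simp
    moreover have "\<not> int p dvd 2"
    proof
      assume "int p dvd 2"
      then have "p dvd 2"
        by (metis int_dvd_int_iff of_nat_numeral)
      then have "p \<le> 2"
        by (simp add: dvd_imp_le)
      then show False
        using assms(1,2) prime_ge_2_nat[of p] by (cases "p = 2") auto
    qed
    ultimately show False
      using assms(1,4) prime_dvd_mult_iff[of "int p"] by simp
  qed
  then have "coprime (int p ^ k) (x + y)"
    using assms(1) by (simp add: prime_imp_coprime)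
  moreover have "int p ^ k dvd (x - y) * (x + y)"
    using assms(5) by (simp add: cong_iff_dvd_diff power2_eq_square algebra_simps)
  ultimately show ?thesis
    by (simp add: cong_iff_dvd_diff coprime_dvd_mult_left_iff)
qed

lemma nonmult_prod_upper_cong:
  assumes "prime p" "odd p" "p ^ e dvd a" "p > 3 \<or> e > 0"
  shows "[nonmult_prod_upper p a = nonmult_prod p a] (mod int p ^ (e + 3))"
proof -
  define S where "S = (\<Sum>i\<in>{1..<p}. int i ^ (p - 3))"
  obtain b where a: "int a = int p ^ e * int b"
    using assms(3) by (metis dvdE of_nat_mult of_nat_power)
  have "2 * int a ^ 2 * int p ^ 3 = int p ^ (e + 3) * (2 * int b ^ 2 * int p ^ e)"
    by (simp add: a power2_eq_square power_add algebra_simps)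
  then have "int p ^ (e + 3) dvd 2 * int a ^ 2 * int p ^ 3"
    by (simp only: dvd_triv_left)
  with nonmult_prod_upper_sq_cong[OF assms(1,2), of a]
  have "[nonmult_prod_upper p a ^ 2 = nonmult_prod p a ^ 2 * (1 - 2 * int a ^ 3 * int p ^ 2 * S)]
      (mod int p ^ (e + 3))"
    unfolding S_def by (rule cong_dvd_modulus)
  also have "[nonmult_prod p a ^ 2 * (1 - 2 * int a ^ 3 * int p ^ 2 * S) = nonmult_prod p a ^ 2]
      (mod int p ^ (e + 3))"
  proof -
    \<comment> \<open>the correction term is small enough because of p^e | a if e > 0, and of p | S if p > 3\<close>
    have a3: "int a ^ 3 * int p ^ 2 = int p ^ (e * 3 + 2) * int b ^ 3"
      by (simp add: a power_mult_distrib power_add power_mult power2_eq_square)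
    have "int p ^ (e + 3) dvd int a ^ 3 * int p ^ 2 * S"
    proof (cases "e > 0")
      case True
      then have "int p ^ (e + 3) dvd int p ^ (e * 3 + 2)"
        by (intro le_imp_power_dvd) simp
      then show ?thesis
        unfolding a3 by (intro dvd_mult2)
    next
      case False
      then have "p \<ge> 5"
        using assms(2,4) by presburger
      then have "int p dvd S"
        unfolding S_def using assms(1) by (intro prime_dvd_sum_powers_p_minus_3)
      then have "int p ^ (e * 3 + 2) * int p dvd int a ^ 3 * int p ^ 2 * S"
        unfolding a3 by (rule mult_dvd_mono[OF dvd_triv_left])
      then show ?thesis
        using False by (simp add: power_numeral_reduce)
    qed
    then have "int p ^ (e + 3) dvd nonmult_prod p a ^ 2 * 2 * (int a ^ 3 * int p ^ 2 * S)"
      by (rule dvd_mult)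
    then show ?thesis
      by (simp add: cong_iff_dvd_diff algebra_simps)
  qed
  finally show ?thesis
    by (rule cong_of_square_cong[OF assms(1,2) nonmult_prod_upper_cong_mod_p
          prime_not_dvd_nonmult_prod[OF assms(1)]])
qed

lemma three_dvd_times_square_plus_2: "(3 :: int) dvd x * (x ^ 2 + 2)"
proof -
  have "3 dvd x - 1 \<or> 3 dvd x \<or> (3 :: int) dvd x + 1"
    by presburger
  then have "3 dvd (x - 1) * x * (x + 1)"
    by (auto intro: dvd_mult dvd_mult2)
  moreover have "x * (x ^ 2 + 2) = (x - 1) * x * (x + 1) + 3 * x"
    by (simp add: algebra_simps power2_eq_square)
  ultimately show ?thesis
    by simp
qed

lemma nonmult_prod_upper_cong_3:
  "[nonmult_prod_upper 3 a = nonmult_prod 3 a * (1 + 9 * int a)] (mod 27)"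
proof -
  define Q where "Q = nonmult_prod 3 a"
  have "(\<Sum>i\<in>{1..<3 :: nat}. int i ^ (3 - 3)) = 2"
    by (simp add: numeral_3_eq_3)
  then have "[nonmult_prod_upper 3 a ^ 2 = Q ^ 2 * (1 - 36 * int a ^ 3)] (mod 54 * int a ^ 2)"
    using nonmult_prod_upper_sq_cong[of 3 a] by (simp add: Q_def)
  then have "[nonmult_prod_upper 3 a ^ 2 = Q ^ 2 * (1 - 36 * int a ^ 3)] (mod 27)"
    by (rule cong_dvd_modulus) simp
  also have "[Q ^ 2 * (1 - 36 * int a ^ 3) = (Q * (1 + 9 * int a)) ^ 2] (mod 27)"
  proof -
    obtain k where "int a * (int a ^ 2 + 2) = 3 * k"
      using three_dvd_times_square_plus_2 by blast
    then have "36 * int a ^ 3 = 108 * k - 72 * int a"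
      by (simp add: algebra_simps power2_eq_square power3_eq_cube)
    then have "Q ^ 2 * (1 - 36 * int a ^ 3) - (Q * (1 + 9 * int a)) ^ 2
        = 27 * (Q ^ 2 * (2 * int a - 3 * int a ^ 2 - 4 * k))"
      by (simp only:) (simp add: algebra_simps power2_eq_square)
    then show ?thesis
      by (simp add: cong_iff_dvd_diff)
  qed
  finally have sq: "[nonmult_prod_upper 3 a ^ 2 = (Q * (1 + 9 * int a)) ^ 2] (mod int 3 ^ 3)"
    by simp
  have "[Q = Q * (1 + 9 * int a)] (mod 3)"
    by (simp add: cong_iff_dvd_diff algebra_simps)
  then have mod_3: "[nonmult_prod_upper 3 a = Q * (1 + 9 * int a)] (mod int 3)"
    using nonmult_prod_upper_cong_mod_p[of 3 a] unfolding Q_def by (simp add: cong_trans)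
  have not_dvd: "\<not> int 3 dvd Q * (1 + 9 * int a)"
    using prime_not_dvd_nonmult_prod[of 3 a] cong_dvd_iff[OF \<open>[Q = _] (mod 3)\<close>]
    by (simp add: Q_def)
  have "[nonmult_prod_upper 3 a = Q * (1 + 9 * int a)] (mod int 3 ^ 3)"
    by (rule cong_of_square_cong[OF _ _ mod_3 not_dvd sq]) simp_all
  then show ?thesis
    by (simp add: Q_def)
qed

lemma prime_power_dvd_mult_split:
  fixes p n s x :: nat
  assumes "prime p" "p ^ n dvd s * x"
  shows "\<exists>j\<le>n. p ^ j dvd s \<and> p ^ (n - j) dvd x"
  using assms(2)
proof (induction n arbitrary: s)
  case (Suc n)
  show ?case
  proof (cases "p dvd s")
    case True
    then obtain s' where s': "s = p * s'"
      by blast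
    with Suc.prems have "p ^ n dvd s' * x"
      using assms(1) by (simp add: mult.assoc prime_gt_0_nat)
    then obtain j where "j \<le> n" "p ^ j dvd s'" "p ^ (n - j) dvd x"
      using Suc.IH by blast
    with s' show ?thesis
      by (intro exI[of _ "Suc j"]) auto
  next
    case False
    then have "coprime (p ^ Suc n) s"
      using assms(1) by (simp add: prime_imp_coprime)
    with Suc.prems have "p ^ Suc n dvd x"
      by (simp add: coprime_dvd_mult_right_iff)
    then show ?thesis
      by (intro exI[of _ 0]) auto
  qed
qed simp

lemma prime_power_dvd_binomial:
  assumes "prime p" "p ^ n dvd N" "s > 0"
  shows "\<exists>j\<le>n. p ^ j dvd s \<and> p ^ (n - j) dvd (N choose s)"
proof -
  have "s * (N choose s) = N * ((N - 1) choose (s - 1))"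
    using assms(3) by (intro times_binomial_minus1_eq)
  then have "p ^ n dvd s * (N choose s)"
    using assms(2) by (metis dvd_mult2)
  then show ?thesis
    by (rule prime_power_dvd_mult_split[OF assms(1)])
qed

lemma nonmult_prod_upper_pair_cong_3:
  "[nonmult_prod_upper 3 s * nonmult_prod_upper 3 t
      = nonmult_prod 3 s * nonmult_prod 3 t * (1 + 9 * int (s + t))] (mod 27)"
proof -
  have "[nonmult_prod_upper 3 s * nonmult_prod_upper 3 t
      = nonmult_prod 3 s * (1 + 9 * int s) * (nonmult_prod 3 t * (1 + 9 * int t))] (mod 27)"
    by (intro cong_mult nonmult_prod_upper_cong_3)
  also have "nonmult_prod 3 s * (1 + 9 * int s) * (nonmult_prod 3 t * (1 + 9 * int t))
      = nonmult_prod 3 s * nonmult_prod 3 t * (1 + 9 * int (s + t))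
        + 27 * (3 * nonmult_prod 3 s * nonmult_prod 3 t * int s * int t)"
    by (simp add: algebra_simps)
  also have "[\<dots> = nonmult_prod 3 s * nonmult_prod 3 t * (1 + 9 * int (s + t))] (mod 27)"
    by (simp add: cong_iff_dvd_diff)
  finally show ?thesis .
qed

lemma binomial_nonmult_pair_dvd:
  assumes "prime p" "odd p" "n > 0 \<or> p > 3" "p ^ n dvd s + t" "s > 0"
  shows "int p ^ (n + 3) dvd int ((s + t) choose s)
           * (nonmult_prod_upper p s * nonmult_prod_upper p t - nonmult_prod p s * nonmult_prod p t)"
proof -
  obtain j where j: "j \<le> n" "p ^ j dvd s" "p ^ (n - j) dvd ((s + t) choose s)"
    using prime_power_dvd_binomial[OF assms(1,4,5)] by blast
  then have "p ^ j dvd t"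
    using assms(4) by (metis dvd_add_right_iff le_imp_power_dvd dvd_trans)
  have binom: "int p ^ (n - j) dvd int ((s + t) choose s)"
    using j(3) by (metis int_dvd_int_iff of_nat_power)
  have "[nonmult_prod_upper p s * nonmult_prod_upper p t = nonmult_prod p s * nonmult_prod p t]
      (mod int p ^ (j + 3))"
  proof (cases "p > 3 \<or> j > 0")
    case True
    then show ?thesis
      using assms(1,2) j(2) \<open>p ^ j dvd t\<close> by (intro cong_mult nonmult_prod_upper_cong)
  next
    case False
    moreover have "p \<ge> 2"
      using assms(1) by (rule prime_ge_2_nat)
    ultimately have "p = 3" "j = 0" "n > 0"
      using assms(2,3) by presburger+
    then have "3 dvd s + t"
      using assms(4) dvd_power[of n p] by (auto intro: dvd_trans)
    then obtain k where "s + t = 3 * k"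
      by blast
    then have "27 dvd 9 * int (s + t)"
      by simp
    then have "27 dvd nonmult_prod 3 s * nonmult_prod 3 t * (9 * int (s + t))"
      by (rule dvd_mult)
    then have "[nonmult_prod 3 s * nonmult_prod 3 t * (1 + 9 * int (s + t))
        = nonmult_prod 3 s * nonmult_prod 3 t] (mod 27)"
      by (simp add: cong_iff_dvd_diff ring_distribs)
    with nonmult_prod_upper_pair_cong_3[of s t] show ?thesis
      using \<open>p = 3\<close> \<open>j = 0\<close> by (auto intro: cong_trans)
  qed
  then have "int p ^ (n - j) * int p ^ (j + 3) dvd int ((s + t) choose s)
      * (nonmult_prod_upper p s * nonmult_prod_upper p t - nonmult_prod p s * nonmult_prod p t)"
    unfolding cong_iff_dvd_diff using binom by (rule mult_dvd_mono[rotated])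
  moreover have "n - j + (j + 3) = n + 3"
    using j(1) by simp
  ultimately show ?thesis
    by (simp flip: power_add)
qed

lemma central_binomial_pair_cong:
  assumes "prime p"
    and "int p ^ k dvd A * (nonmult_prod_upper p s * nonmult_prod_upper p t
                              - nonmult_prod p s * nonmult_prod p t * u)"
  shows "[A * int ((2 * s * p) choose (s * p)) * int ((2 * t * p) choose (t * p))
          = A * int ((2 * s) choose s) * int ((2 * t) choose t) * u] (mod int p ^ k)"
proof -
  define Q where "Q = nonmult_prod p s * nonmult_prod p t"
  have "coprime Q (int p ^ k)"
    using assms(1) prime_not_dvd_nonmult_prod[OF assms(1)]
    by (simp add: Q_def prime_imp_coprime coprime_commute[of _ "int p"])
  have "p > 0"
    using assms(1) by (rule prime_gt_0_nat)
  have "A * int ((2 * s * p) choose (s * p)) * int ((2 * t * p) choose (t * p)) * Q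
      = A * (int ((2 * s * p) choose (s * p)) * nonmult_prod p s)
          * (int ((2 * t * p) choose (t * p)) * nonmult_prod p t)"
    by (simp add: Q_def ac_simps)
  also have "\<dots> = A * (int ((2 * s) choose s) * nonmult_prod_upper p s)
          * (int ((2 * t) choose t) * nonmult_prod_upper p t)"
    by (simp only: central_binomial_nonmult[OF \<open>p > 0\<close>])
  also have "[\<dots> = A * int ((2 * s) choose s) * int ((2 * t) choose t) * u * Q] (mod int p ^ k)"
  proof -
    have "A * (int ((2 * s) choose s) * nonmult_prod_upper p s)
          * (int ((2 * t) choose t) * nonmult_prod_upper p t)
        - A * int ((2 * s) choose s) * int ((2 * t) choose t) * u * Q
        = int ((2 * s) choose s) * int ((2 * t) choose t) * (A * (nonmult_prod_upper p s
            * nonmult_prod_upper p t - nonmult_prod p s * nonmult_prod p t * u))"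
      by (simp add: Q_def algebra_simps)
    then show ?thesis
      using assms(2) by (simp add: cong_iff_dvd_diff)
  qed
  finally show ?thesis
    using cong_mult_rcancel[OF \<open>coprime Q _\<close>] by blast
qed

lemma central_binomial_product_cong:
  assumes "prime p" "odd p" "n > 0 \<or> p > 3" "p ^ n dvd N" "s > 0" "s \<le> N"
  shows "[int (N choose s) * int ((2 * s * p) choose (s * p))
            * int ((2 * (N - s) * p) choose ((N - s) * p))
          = int (N choose s) * int ((2 * s) choose s) * int ((2 * (N - s)) choose (N - s))]
         (mod int p ^ (n + 3))"
proof -
  have "s + (N - s) = N"
    using assms(6) by simp
  then have "int p ^ (n + 3) dvd int (N choose s) * (nonmult_prod_upper p s * nonmult_prod_upper p (N - s)
      - nonmult_prod p s * nonmult_prod p (N - s) * 1)"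
    using binomial_nonmult_pair_dvd[OF assms(1,2,3), of s "N - s"] assms(4,5) by simp
  from central_binomial_pair_cong[OF assms(1) this] show ?thesis
    by simp
qed

lemma central_binomial_product_cong_3:
  assumes "s \<le> m"
  shows "[int (m choose s) * int ((2 * s * 3) choose (s * 3))
            * int ((2 * (m - s) * 3) choose ((m - s) * 3))
          = int (m choose s) * int ((2 * s) choose s) * int ((2 * (m - s)) choose (m - s))
            * (1 + 9 * int m)] (mod 27)"
proof -
  have "s + (m - s) = m"
    using assms by simp
  then have "27 dvd nonmult_prod_upper 3 s * nonmult_prod_upper 3 (m - s)
      - nonmult_prod 3 s * nonmult_prod 3 (m - s) * (1 + 9 * int m)"
    using nonmult_prod_upper_pair_cong_3[of s "m - s"] by (simp add: cong_iff_dvd_diff)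
  then have "int 3 ^ 3 dvd int (m choose s) * (nonmult_prod_upper 3 s * nonmult_prod_upper 3 (m - s)
      - nonmult_prod 3 s * nonmult_prod 3 (m - s) * (1 + 9 * int m))"
    by simp
  from central_binomial_pair_cong[OF _ this] show ?thesis
    by simp
qed

theorem lemma2p11:
  fixes p r m s :: nat
  assumes "prime p" and "odd p" and "r \<ge> 1" and "m \<ge> 1"
    and "1 \<le> s" and "s \<le> m * p ^ (r - 1)"
  shows "(r = 1 \<and> p = 3 \<longrightarrow>
          [int ((m * p ^ (r - 1)) choose s) * int ((2 * s * p) choose (s * p))
             * int ((2 * (m * p ^ (r - 1) - s) * p) choose ((m * p ^ (r - 1) - s) * p))
           = int (m choose s) * int ((2 * s) choose s) * int ((2 * (m - s)) choose (m - s))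
             * (1 + 9 * int m)] (mod int p ^ (r + 2)))
       \<and> (r > 1 \<or> p > 3 \<longrightarrow>
          [int ((m * p ^ (r - 1)) choose s) * int ((2 * s * p) choose (s * p))
             * int ((2 * (m * p ^ (r - 1) - s) * p) choose ((m * p ^ (r - 1) - s) * p))
           = int ((m * p ^ (r - 1)) choose s) * int ((2 * s) choose s)
             * int ((2 * (m * p ^ (r - 1) - s)) choose (m * p ^ (r - 1) - s))] (mod int p ^ (r + 2)))"
  using central_binomial_product_cong[OF assms(1,2), of "r - 1" "m * p ^ (r - 1)" s]
    central_binomial_product_cong_3[of s m] assms(3-6)
  by auto

end
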